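(* Let $\alpha,\beta,r>0$ and let the monopoly demand be $D_M(p)=(\alpha-p)/\beta$. Consider a monopolist with remaining capacity following $dx(t)=-D_M(p(x(t)))\,dt$, $x(0)=x\ge0$ (deterministic, $\sigma=0$), choosing a Markov price $p(\cdot)\ge0$, with value function $$v_M(x)=\sup_{p\ge0}\int_0^\infty e^{-rt}p(x(t))D_M(p(x(t)))\mathbf{1}_{\{x(t)>0\}}\,dt .$$ Then $$v_M(x)=\frac{\alpha^2}{4\beta r}\Big[\mathbf{W}\big(-e^{-\mu x-1}\big)+1\Big]^2,\qquad \mu=\frac{2\beta r}{\alpha},$$ where $\mathbf{W}$ is the Lambert $W$ function (principal branch), defined by $Y=\mathbf{W}(Y)e^{\mathbf{W}(Y)}$ on $Y\ge -e^{-1}$.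
   Context: The associated Bellman equation is $\frac{1}{4\beta}(v_M'-\alpha)^2-rv_M=0$ with $v_M(0)=0$, and solutions with $\lim_{x\to\infty}v_M'(x)=0$ are sought. *)

theory Defs
  imports "HOL-Analysis.Analysis"
begin

definition lambertW :: "real \<Rightarrow> real" where
  "lambertW y = (THE w. w \<ge> -1 \<and> w * exp w = y)"

definition demandM :: "real \<Rightarrow> real \<Rightarrow> real \<Rightarrow> real" where
  "demandM \<alpha> \<beta> p = (\<alpha> - p) / \<beta>"

definition revenueM :: "real \<Rightarrow> real \<Rightarrow> real \<Rightarrow> (real \<Rightarrow> real) \<Rightarrow> (real \<Rightarrow> real) \<Rightarrow> real \<Rightarrow> real" where
  "revenueM \<alpha> \<beta> r p X t =
     exp (- r * t) * p (X t) * demandM \<alpha> \<beta> (p (X t)) * (if X t > 0 then 1 else 0)"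

definition admissibleM :: "real \<Rightarrow> real \<Rightarrow> real \<Rightarrow> real \<Rightarrow> (real \<Rightarrow> real) \<Rightarrow> (real \<Rightarrow> real) \<Rightarrow> bool" where
  "admissibleM \<alpha> \<beta> r x p X \<longleftrightarrow>
     (\<forall>y. p y \<ge> 0) \<and> X 0 = x \<and>
     (\<forall>t\<ge>0. (X has_real_derivative (- demandM \<alpha> \<beta> (p (X t)))) (at t within {0..})) \<and>
     set_integrable lborel {0..} (revenueM \<alpha> \<beta> r p X)"

definition valueM :: "real \<Rightarrow> real \<Rightarrow> real \<Rightarrow> real \<Rightarrow> real" where
  "valueM \<alpha> \<beta> r x =
     Sup {J. \<exists>p X. admissibleM \<alpha> \<beta> r x p X \<and>
                  J = (LINT t:{0..}|lborel. revenueM \<alpha> \<beta> r p X t)}"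

end

theory Submission
  imports Defs
begin

text \<open>Write \<open>omega y = W (- exp (- mu * y - 1))\<close>. The candidate
  \<open>vM y = K * (omega y + 1)^2\<close> solves the Bellman equation \<open>(vM' - \<alpha>)^2 / (4 * \<beta>) = r * vM\<close>
  on \<open>(0, \<infinity>)\<close> with \<open>vM' = - \<alpha> * omega\<close>, vanishes at \<open>0\<close> and satisfies \<open>vM y \<le> \<alpha> * y\<close>.
  For an admissible pair the Bellman inequality \<open>p * D p \<le> r * vM + vM' * D p\<close> says that
  \<open>exp (- r * t) * vM (X t)\<close> decreases at least at the rate of the discounted revenue.
  The composition is differentiable except where \<open>X\<close> reaches \<open>0\<close> with nonzero speed, which
  happens at most once, so integrating bounds the revenue by \<open>vM x\<close>.
  Conversely the price \<open>\<alpha> * (1 - omega y) / 2\<close> attains the maximum in the Bellman equation;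
  along its trajectory \<open>omega (X t) = omega x * exp (r * t)\<close>, capacity runs out at
  \<open>- ln (- omega x) / r\<close>, and the revenue integrates to exactly \<open>vM x\<close>.\<close>

section \<open>Lambert W and the logarithm\<close>

lemma mult_exp_strict_mono:
  fixes a b :: real
  assumes "-1 \<le> a" "a < b"
  shows "a * exp a < b * exp b"
proof (rule DERIV_pos_imp_increasing_open[OF assms(2)])
  fix w assume "a < w" "w < b"
  have "((\<lambda>w. w * exp w) has_real_derivative (1 + w) * exp w) (at w)"
    by (auto intro!: derivative_eq_intros simp: algebra_simps)
  moreover have "0 < (1 + w) * exp w" using assms \<open>a < w\<close> by simp
  ultimately show "\<exists>y. ((\<lambda>w. w * exp w) has_real_derivative y) (at w) \<and> 0 < y" by blast
qed (intro continuous_intros)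

lemma lambertW_eqI:
  assumes "-1 \<le> w" "w * exp w = y"
  shows "lambertW y = w"
  unfolding lambertW_def
proof (rule the_equality)
  fix v assume v: "-1 \<le> v \<and> v * exp v = y"
  show "v = w"
  proof (rule ccontr)
    assume "v \<noteq> w"
    then consider "v < w" | "w < v" by linarith
    then show False
      using mult_exp_strict_mono[of v w] mult_exp_strict_mono[of w v] v assms by cases auto
  qed
qed (use assms in auto)

lemma lambertW_neg:
  fixes y :: real
  assumes "- exp (-1) \<le> y" "y < 0"
  shows "-1 \<le> lambertW y" "lambertW y < 0" "lambertW y * exp (lambertW y) = y"
proof -
  obtain w where w: "-1 \<le> w" "w \<le> 0" "w * exp w = y"
    using IVT[of "\<lambda>w. w * exp w" "-1" y 0] assms by (auto intro!: continuous_intros simp: exp_minus)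
  moreover have "w \<noteq> 0" using w assms by auto
  ultimately show "-1 \<le> lambertW y" "lambertW y < 0" "lambertW y * exp (lambertW y) = y"
    using lambertW_eqI[OF w(1,3)] by auto
qed

lemma ln_less_minus_one:
  fixes u :: real
  assumes "0 < u" "u \<noteq> 1"
  shows "ln u < u - 1"
  using ln_le_minus_one[of u] ln_eq_minus_one[of u] assms by fastforce

lemma square_le_ln_gap:
  fixes u :: real
  assumes "0 < u" "u \<le> 1"
  shows "(1 - u)^2 \<le> 2 * (u - 1 - ln u)"
proof -
  let ?g = "\<lambda>t. 2 * (t - 1 - ln t) - (1 - t)^2"
  have "?g 1 \<le> ?g u"
  proof (rule DERIV_nonpos_imp_decreasing_open[OF assms(2)])
    fix t assume t: "u < t" "t < 1"
    have "(?g has_real_derivative - 2 * (1 - t)^2 / t) (at t)"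
      using t assms by (auto intro!: derivative_eq_intros simp: field_simps power2_eq_square)
    then show "\<exists>y. (?g has_real_derivative y) (at t) \<and> y \<le> 0"
      using t assms by auto
  qed (use assms in \<open>intro continuous_intros; auto\<close>)
  then show ?thesis by simp
qed

lemma unique_zero_of_deriv_pos_at_zeros:
  fixes f :: "real \<Rightarrow> real"
  assumes cont: "continuous_on {a..b} f"
    and deriv: "\<And>s. s \<in> {a..b} \<Longrightarrow> f s = 0 \<Longrightarrow> \<exists>D>0. (f has_real_derivative D) (at s)"
    and zeros: "f a = 0" "f b = 0" and "a \<le> b"
  shows "a = b"
proof (rule ccontr)
  assume "a \<noteq> b"
  with \<open>a \<le> b\<close> have ab: "a < b" by simp
  obtain D where "D > 0" "(f has_real_derivative D) (at a)"
    using deriv[of a] ab zeros by auto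
  then obtain d where d: "d > 0" "\<And>h. 0 < h \<Longrightarrow> h < d \<Longrightarrow> f a < f (a + h)"
    using DERIV_pos_inc_right by blast
  define a1 where "a1 = a + min d (b - a) / 2"
  have "0 < min d (b - a) / 2" "min d (b - a) / 2 < d" "min d (b - a) / 2 < b - a"
    using d ab by auto
  then have a1: "a < a1" "a1 < b" "0 < f a1"
    using d(2) zeros by (auto simp: a1_def)
  txt \<open>\<open>f\<close> is positive right after \<open>a\<close>; the first zero \<open>t0\<close> after that is then approached
    from above, contradicting \<open>f' t0 > 0\<close>.\<close>
  define Z where "Z = {a1..b} \<inter> f -` {0}"
  have "closed Z"
    unfolding Z_def using a1 ab by (intro continuous_closed_preimage continuous_on_subset[OF cont]) auto
  moreover have "b \<in> Z" "bdd_below Z"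
    using a1 zeros by (auto simp: Z_def intro: bdd_belowI[of _ a1])
  ultimately have "Inf Z \<in> Z" using closed_contains_Inf by blast
  define t0 where "t0 = Inf Z"
  have "a1 \<le> t0" "t0 \<le> b" "f t0 = 0"
    using \<open>Inf Z \<in> Z\<close> by (auto simp: Z_def t0_def)
  moreover have "a1 \<noteq> t0" using \<open>f t0 = 0\<close> a1 by auto
  ultimately have t0: "a1 < t0" "t0 \<le> b" "f t0 = 0" by auto
  have pos_before: "0 < f s" if s: "a1 \<le> s" "s < t0" for s
  proof (rule ccontr)
    assume "\<not> 0 < f s"
    moreover have "continuous_on {a1..s} f"
      using s t0 a1 by (intro continuous_on_subset[OF cont]) auto
    ultimately obtain s' where s': "a1 \<le> s'" "s' \<le> s" "f s' = 0"
      using IVT2'[of f s 0 a1] a1(3) s(1) by force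
    then have "s' \<in> Z" using s t0 by (auto simp: Z_def)
    then have "t0 \<le> s'" using \<open>bdd_below Z\<close> unfolding t0_def by (rule cInf_lower)
    with s'(2) s(2) show False by simp
  qed
  obtain D' where "D' > 0" "(f has_real_derivative D') (at t0)"
    using deriv[of t0] t0 a1 by auto
  then obtain d' where d': "d' > 0" "\<And>h. 0 < h \<Longrightarrow> h < d' \<Longrightarrow> f (t0 - h) < f t0"
    using DERIV_pos_inc_left by blast
  define h where "h = min d' (t0 - a1) / 2"
  have "0 < h" "h < d'" "h \<le> t0 - a1" using d' t0 by (auto simp: h_def)
  then have "f (t0 - h) < 0" "0 < f (t0 - h)"
    using d'(2)[of h] pos_before[of "t0 - h"] t0 by auto
  then show False by simp
qed

lemma DERIV_comp_zero_of_linear_bound: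
  fixes g h :: "real \<Rightarrow> real"
  assumes bound: "\<And>y. \<bar>g y\<bar> \<le> C * \<bar>y\<bar>"
    and h: "(h has_real_derivative 0) (at t)" "h t = 0"
  shows "((\<lambda>s. g (h s)) has_real_derivative 0) (at t)"
proof -
  have g0: "g (h t) = 0" using bound[of 0] h(2) by simp
  have "((\<lambda>s. (h s - h t) / (s - t)) \<longlongrightarrow> 0) (at t)"
    using h(1) by (simp add: has_field_derivative_iff)
  then have lim: "((\<lambda>s. C * \<bar>(h s - h t) / (s - t)\<bar>) \<longlongrightarrow> 0) (at t)"
    by (intro tendsto_mult_right_zero tendsto_rabs_zero)
  have bnd: "norm ((g (h s) - g (h t)) / (s - t)) \<le> C * \<bar>(h s - h t) / (s - t)\<bar>" for s
  proof -
    have "norm ((g (h s) - g (h t)) / (s - t)) = \<bar>g (h s)\<bar> / \<bar>s - t\<bar>"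
      using g0 by (simp add: abs_divide)
    also have "\<dots> \<le> C * \<bar>h s\<bar> / \<bar>s - t\<bar>" by (rule divide_right_mono[OF bound]) simp
    also have "\<dots> = C * \<bar>(h s - h t) / (s - t)\<bar>" using h(2) by (simp add: abs_divide)
    finally show ?thesis .
  qed
  have "((\<lambda>s. (g (h s) - g (h t)) / (s - t)) \<longlongrightarrow> 0) (at t)"
    by (rule Lim_null_comparison[OF always_eventually lim]) (use bnd in blast)
  then show ?thesis by (simp add: has_field_derivative_iff)
qed

section \<open>The candidate value function\<close>

locale monopoly =
  fixes \<alpha> \<beta> r :: real
  assumes \<alpha>_pos: "\<alpha> > 0" and \<beta>_pos: "\<beta> > 0" and r_pos: "r > 0"
begin

definition "mu = 2 * \<beta> * r / \<alpha>"
definition "K = \<alpha>^2 / (4 * \<beta> * r)"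

definition "omega y = lambertW (- exp (- mu * y - 1))"

definition "capacity w = (- ln (- w) - w - 1) / mu"

definition "vM y = (if 0 < y then K * (omega y + 1)^2 else 0)"

definition "vM' y = (if 0 < y then - \<alpha> * omega y else 0)"

lemma mu_pos: "mu > 0"
  using \<alpha>_pos \<beta>_pos r_pos by (simp add: mu_def)

lemma K_pos: "K > 0"
  using \<alpha>_pos \<beta>_pos r_pos by (simp add: K_def)

lemma K_mu: "2 * K * mu = \<alpha>"
  using \<alpha>_pos \<beta>_pos r_pos by (simp add: K_def mu_def power2_eq_square field_simps)

lemma omega_nonneg_arg:
  assumes "0 \<le> y"
  shows "-1 \<le> omega y" "omega y < 0" "omega y * exp (omega y) = - exp (- mu * y - 1)"
proof -
  have "- exp (-1) \<le> - exp (- mu * y - 1)" using assms mu_pos by simp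
  then show "-1 \<le> omega y" "omega y < 0" "omega y * exp (omega y) = - exp (- mu * y - 1)"
    unfolding omega_def by (auto intro: lambertW_neg)
qed

lemma omega_0: "omega 0 = -1"
  unfolding omega_def by (rule lambertW_eqI) auto

lemma omega_gt_minus_one:
  assumes "0 < y"
  shows "-1 < omega y"
proof -
  have "omega y \<noteq> -1"
  proof
    assume "omega y = -1"
    with omega_nonneg_arg(3)[of y] assms have "exp (-1) = exp (- mu * y - 1)" by auto
    with assms mu_pos show False by simp
  qed
  with omega_nonneg_arg(1)[of y] assms show ?thesis by auto
qed

lemma capacity_omega:
  assumes "0 \<le> y"
  shows "capacity (omega y) = y"
proof -
  define w where "w = omega y"
  have w: "w < 0" "w * exp w = - exp (- mu * y - 1)"
    using omega_nonneg_arg[OF assms] by (auto simp: w_def)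
  have e: "exp (- mu * y - 1) = -w * exp w" using w(2) by simp
  have "exp (- mu * y - 1 - w) = exp (- mu * y - 1) / exp w" by (rule exp_diff)
  also have "\<dots> = -w * exp w / exp w" by (simp only: e)
  also have "\<dots> = -w" by simp
  finally have "exp (- mu * y - 1 - w) = -w" .
  then have "ln (-w) = - mu * y - 1 - w"
    by (metis ln_exp)
  then show ?thesis using mu_pos by (simp add: capacity_def w_def[symmetric] field_simps)
qed

lemma omega_capacity:
  assumes "-1 < w" "w < 0"
  shows "omega (capacity w) = w"
  unfolding omega_def
proof (rule lambertW_eqI)
  have "- mu * capacity w - 1 = ln (-w) + w" using mu_pos by (simp add: capacity_def field_simps)
  then show "w * exp w = - exp (- mu * capacity w - 1)" using assms by (simp add: exp_add)
qed (use assms in auto)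

lemma capacity_pos:
  assumes "-1 < w" "w < 0"
  shows "0 < capacity w"
  using ln_less_minus_one[of "-w"] assms mu_pos by (simp add: capacity_def)

lemma capacity_has_derivative:
  assumes "w < 0"
  shows "(capacity has_real_derivative (- 1 / w - 1) / mu) (at w)"
  unfolding capacity_def[abs_def] using assms mu_pos
  by (auto intro!: derivative_eq_intros simp: field_simps)

lemma isCont_omega:
  assumes "0 < y"
  shows "isCont omega y"
proof -
  define w where "w = omega y"
  have w: "-1 < w" "w < 0"
    using omega_gt_minus_one[OF assms] omega_nonneg_arg[of y] assms by (auto simp: w_def)
  define d where "d = min (1 + w) (- w) / 2"
  have "0 < d" using w by (simp add: d_def)
  then have "isCont omega (capacity w)"
  proof (rule isCont_inverse_function[where f = capacity])
    fix z assume "\<bar>z - w\<bar> \<le> d"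
    moreover have "d \<le> (1 + w) / 2" "d \<le> - w / 2" by (auto simp: d_def)
    ultimately have "-1 < z" "z < 0" using w by (auto simp: abs_le_iff)
    then show "omega (capacity z) = z" "isCont capacity z"
      by (auto intro: omega_capacity DERIV_isCont[OF capacity_has_derivative])
  qed
  then show ?thesis using capacity_omega[of y] assms by (simp add: w_def)
qed

lemma omega_has_derivative:
  assumes "0 < y"
  shows "(omega has_real_derivative (- omega y * mu / (1 + omega y))) (at y)"
proof -
  define w where "w = omega y"
  have w: "-1 < w" "w < 0"
    using omega_gt_minus_one[OF assms] omega_nonneg_arg[of y] assms by (auto simp: w_def)
  have "(omega has_real_derivative inverse ((- 1 / w - 1) / mu)) (at y)"
  proof (rule DERIV_inverse_function[where a = 0 and b = "y + 1"])
    show "(capacity has_real_derivative (- 1 / w - 1) / mu) (at (omega y))"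
      using capacity_has_derivative[OF w(2)] by (simp add: w_def)
    show "(- 1 / w - 1) / mu \<noteq> 0" using w mu_pos by (simp add: field_simps)
  qed (use assms capacity_omega isCont_omega in auto)
  moreover have "inverse ((- 1 / w - 1) / mu) = - w * mu / (1 + w)"
    using w mu_pos by (simp add: field_simps)
  ultimately show ?thesis by (simp add: w_def)
qed

lemma vM_has_derivative:
  assumes "y \<noteq> 0"
  shows "(vM has_real_derivative vM' y) (at y)"
proof (cases "0 < y")
  case True
  define w where "w = omega y"
  have w: "-1 < w" "w < 0"
    using omega_gt_minus_one[OF True] omega_nonneg_arg[of y] True by (auto simp: w_def)
  have "((\<lambda>z. K * (omega z + 1)^2) has_real_derivative K * (2 * (w + 1) * (- w * mu / (1 + w)))) (at y)"
    using omega_has_derivative[OF True] by (auto intro!: derivative_eq_intros simp: w_def)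
  moreover have "K * (2 * (w + 1) * (- w * mu / (1 + w))) = - (2 * K * mu) * w"
    using w by (simp add: field_simps)
  moreover have "vM' y = - (2 * K * mu) * w"
    unfolding K_mu vM'_def w_def using True by simp
  ultimately have "((\<lambda>z. K * (omega z + 1)^2) has_real_derivative vM' y) (at y)"
    by simp
  then show ?thesis
    by (rule has_field_derivative_transform_within_open[where S = "{0<..}"])
       (use True in \<open>auto simp: vM_def\<close>)
next
  case False
  with assms have "y < 0" by simp
  have "(vM has_real_derivative 0) (at y)"
    by (rule has_field_derivative_transform_within_open[OF DERIV_const, where S = "{..<0}"])
       (use \<open>y < 0\<close> in \<open>auto simp: vM_def\<close>)
  then show ?thesis using \<open>y < 0\<close> by (simp add: vM'_def)
qed

lemma vM_nonneg: "0 \<le> vM y"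
  using K_pos by (simp add: vM_def)

lemma vM_eq:
  assumes "0 \<le> y"
  shows "vM y = K * (omega y + 1)^2"
  using assms omega_0 by (cases "y = 0") (auto simp: vM_def)

lemma vM_le: "vM y \<le> \<alpha> * \<bar>y\<bar>"
proof (cases "0 < y")
  case True
  define w where "w = omega y"
  have w: "-1 < w" "w < 0"
    using omega_gt_minus_one[OF True] omega_nonneg_arg[of y] True by (auto simp: w_def)
  have "(1 + w)^2 \<le> 2 * (- w - 1 - ln (- w))" using square_le_ln_gap[of "-w"] w by simp
  then have "K * (w + 1)^2 \<le> K * (2 * (- w - 1 - ln (- w)))"
    using K_pos by (intro mult_left_mono) (auto simp: add.commute)
  also have "\<dots> = \<alpha> * capacity w"
    using K_mu[symmetric] mu_pos by (simp add: capacity_def field_simps)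
  also have "\<dots> = \<alpha> * y" using capacity_omega[of y] True by (simp add: w_def)
  finally show ?thesis using True by (simp add: vM_def w_def)
qed (use \<alpha>_pos in \<open>simp add: vM_def mult_le_0_iff\<close>)

lemma isCont_vM: "isCont vM y"
proof (cases "y = 0")
  case True
  have "((\<lambda>z. \<alpha> * \<bar>z\<bar>) \<longlongrightarrow> \<alpha> * \<bar>0\<bar>) (at (0::real))" by (intro tendsto_intros)
  then have lim: "((\<lambda>z. \<alpha> * \<bar>z\<bar>) \<longlongrightarrow> 0) (at (0::real))" by simp
  have bound: "norm (vM z - vM 0) \<le> \<alpha> * \<bar>z\<bar>" for z
    using vM_le[of z] vM_nonneg[of z] by (simp add: vM_def)
  have "((\<lambda>z. vM z - vM 0) \<longlongrightarrow> 0) (at 0)"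
    by (rule Lim_null_comparison[OF always_eventually lim]) (use bound in blast)
  then show ?thesis unfolding True isCont_def by (rule LIM_zero_cancel)
qed (rule DERIV_isCont[OF vM_has_derivative])

text \<open>The Bellman inequality; equality holds at the price \<open>q = \<alpha> * (1 - omega y) / 2\<close>.\<close>
lemma hamiltonian_le:
  assumes "0 < y"
  shows "q * demandM \<alpha> \<beta> q + vM' y * (- demandM \<alpha> \<beta> q) \<le> r * vM y"
proof -
  define w where "w = omega y"
  have "4 * ((q + \<alpha> * w) * (\<alpha> - q)) + (2 * q - \<alpha> * (1 - w))^2 = \<alpha>^2 * (1 + w)^2"
    by algebra
  moreover have "0 \<le> (2 * q - \<alpha> * (1 - w))^2" by simp
  ultimately have "(q + \<alpha> * w) * (\<alpha> - q) \<le> \<alpha>^2 * (1 + w)^2 / 4" by linarith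
  then have "(q + \<alpha> * w) * (\<alpha> - q) / \<beta> \<le> \<alpha>^2 * (1 + w)^2 / 4 / \<beta>"
    using \<beta>_pos by (intro divide_right_mono) auto
  moreover have "q * demandM \<alpha> \<beta> q + vM' y * (- demandM \<alpha> \<beta> q) = (q + \<alpha> * w) * (\<alpha> - q) / \<beta>"
    using assms by (simp add: vM'_def w_def demandM_def add_divide_distrib diff_divide_distrib algebra_simps)
  moreover have "r * vM y = \<alpha>^2 * (1 + w)^2 / 4 / \<beta>"
    using assms r_pos by (simp add: vM_def K_def w_def add.commute)
  ultimately show ?thesis by simp
qed

end

section \<open>Upper bound for admissible pairs\<close>

locale admissible_pair = monopoly +
  fixes x :: real and p X :: "real \<Rightarrow> real"
  assumes admissible: "admissibleM \<alpha> \<beta> r x p X"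
begin

definition "sales t = demandM \<alpha> \<beta> (p (X t))"

definition "discounted_value t = exp (- r * t) * vM (X t)"

definition "discounted_value_decay t = exp (- r * t) * (r * vM (X t) + vM' (X t) * sales t)"

lemma X_0: "X 0 = x"
  using admissible by (simp add: admissibleM_def)

lemma X_has_derivative_within:
  "0 \<le> t \<Longrightarrow> (X has_real_derivative - sales t) (at t within {0..})"
  using admissible by (simp add: admissibleM_def sales_def)

lemma X_has_derivative:
  assumes "0 < t"
  shows "(X has_real_derivative - sales t) (at t)"
proof -
  have "(X has_real_derivative - sales t) (at t within {0<..})"
    by (rule has_field_derivative_subset[OF X_has_derivative_within]) (use assms in auto)
  then show ?thesis using at_within_open[of t "{0<..}"] assms by simp
qed

lemma continuous_on_X: "continuous_on {0..} X"
  by (rule DERIV_continuous_on[OF X_has_derivative_within]) auto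

lemma revenue_le_discounted_value_decay: "revenueM \<alpha> \<beta> r p X t \<le> discounted_value_decay t"
proof (cases "0 < X t")
  case True
  have "p (X t) * sales t \<le> r * vM (X t) + vM' (X t) * sales t"
    using hamiltonian_le[OF True, of "p (X t)"] by (simp add: sales_def)
  then have "exp (- r * t) * (p (X t) * sales t) \<le> discounted_value_decay t"
    unfolding discounted_value_decay_def by (rule mult_left_mono) simp
  then show ?thesis using True by (simp add: revenueM_def sales_def mult.assoc)
qed (simp add: revenueM_def discounted_value_decay_def vM_def vM'_def)

lemma vM_X_has_derivative:
  assumes t: "0 < t" and kink_free: "X t = 0 \<longrightarrow> sales t = 0"
  shows "((\<lambda>s. vM (X s)) has_real_derivative vM' (X t) * (- sales t)) (at t)"
proof (cases "X t = 0")
  case True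
  have "\<bar>vM y\<bar> \<le> \<alpha> * \<bar>y\<bar>" for y using vM_le vM_nonneg by simp
  moreover have "(X has_real_derivative 0) (at t)"
    using X_has_derivative[OF t] True kink_free by simp
  ultimately show ?thesis
    using DERIV_comp_zero_of_linear_bound[of vM \<alpha> X t] True by (simp add: vM'_def)
next
  case False
  then show ?thesis using DERIV_chain2[OF vM_has_derivative[OF False] X_has_derivative[OF t]] by simp
qed

lemma discounted_value_has_derivative:
  assumes "0 < t" and "X t = 0 \<longrightarrow> sales t = 0"
  shows "(discounted_value has_real_derivative - discounted_value_decay t) (at t)"
proof -
  have "((\<lambda>s. exp (- r * s)) has_real_derivative - r * exp (- r * t)) (at t)"
    by (auto intro!: derivative_eq_intros)
  from DERIV_mult[OF this vM_X_has_derivative[OF assms]]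
  show ?thesis unfolding discounted_value_def[abs_def] discounted_value_decay_def
    by (rule DERIV_cong) (simp add: algebra_simps)
qed

text \<open>\<open>vM\<close> has a corner at \<open>0\<close>, so \<open>vM \<circ> X\<close> may fail to be differentiable where \<open>X\<close> reaches
  \<open>0\<close> with nonzero speed (a kink). The speed there is \<open>- D (p 0)\<close>, the same at every kink, so
  \<open>X\<close> crosses \<open>0\<close> transversally in a fixed direction, hence at most once.\<close>
lemma kink_unique:
  assumes "0 < a" "a \<le> b" "X a = 0" "X b = 0" "sales a \<noteq> 0"
  shows "a = b"
proof -
  define c where "c = - sales a"
  have "c \<noteq> 0" using assms(5) by (simp add: c_def)
  then have "c * c > 0" by (metis not_real_square_gt_zero)
  have cont: "continuous_on {a..b} (\<lambda>s. c * X s)"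
    using assms(1) by (intro continuous_intros continuous_on_subset[OF continuous_on_X]) auto
  have deriv: "\<exists>D>0. ((\<lambda>s. c * X s) has_real_derivative D) (at s)"
    if "s \<in> {a..b}" "c * X s = 0" for s
  proof -
    have "X s = 0" using that \<open>c * c > 0\<close> by auto
    then have "sales s = - c" using assms(3) by (simp add: sales_def c_def)
    then have "((\<lambda>s. c * X s) has_real_derivative c * c) (at s)"
      using DERIV_cmult[OF X_has_derivative, of s c] that assms(1) by simp
    with \<open>c * c > 0\<close> show ?thesis by blast
  qed
  from cont deriv show ?thesis
    by (rule unique_zero_of_deriv_pos_at_zeros) (use assms in auto)
qed

lemma finite_kinks: "finite {s \<in> {0<..<T}. X s = 0 \<and> sales s \<noteq> 0}" (is "finite ?S")
proof (cases "?S = {}")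
  case False
  then obtain a where a: "a \<in> ?S" by blast
  have "?S \<subseteq> {a}"
  proof
    fix b assume b: "b \<in> ?S"
    show "b \<in> {a}"
      using kink_unique[of a b] kink_unique[of b a] a b by (cases "a \<le> b") auto
  qed
  then show ?thesis by (rule finite_subset) simp
qed (metis finite.emptyI)

lemma continuous_on_discounted_value: "continuous_on {0..T} discounted_value"
proof -
  have "continuous_on {0..T} X" by (rule continuous_on_subset[OF continuous_on_X]) auto
  moreover have "continuous_on UNIV vM"
    by (intro continuous_at_imp_continuous_on ballI isCont_vM)
  ultimately have "continuous_on {0..T} (\<lambda>s. vM (X s))"
    using continuous_on_compose2[of UNIV vM "{0..T}" X] by auto
  then show ?thesis unfolding discounted_value_def[abs_def] by (intro continuous_intros)
qed

lemma revenue_integral_le_vM_finite: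
  assumes "0 \<le> T"
  shows "(LINT s:{0..T}|lborel. revenueM \<alpha> \<beta> r p X s) \<le> vM x"
proof -
  have "((\<lambda>s. - discounted_value_decay s) has_integral
          (discounted_value T - discounted_value 0)) {0..T}"
  proof (rule fundamental_theorem_of_calculus_interior_strong[OF finite_kinks assms _
        continuous_on_discounted_value])
    fix s assume "s \<in> {0<..<T} - {s \<in> {0<..<T}. X s = 0 \<and> sales s \<noteq> 0}"
    then have "(discounted_value has_real_derivative - discounted_value_decay s) (at s)"
      by (intro discounted_value_has_derivative) auto
    then show "(discounted_value has_vector_derivative - discounted_value_decay s) (at s)"
      by (simp add: has_real_derivative_iff_has_vector_derivative)
  qed
  from has_integral_neg[OF this] have decay_integral:
    "(discounted_value_decay has_integral (discounted_value 0 - discounted_value T)) {0..T}"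
    by simp
  have integrable: "set_integrable lborel {0..T} (revenueM \<alpha> \<beta> r p X)"
    by (rule set_integrable_subset[of _ "{0..}"]) (use admissible in \<open>auto simp: admissibleM_def\<close>)
  have "(LINT s:{0..T}|lborel. revenueM \<alpha> \<beta> r p X s) = integral {0..T} (revenueM \<alpha> \<beta> r p X)"
    using set_borel_integral_eq_integral(2)[OF integrable] by simp
  also have "\<dots> \<le> integral {0..T} discounted_value_decay"
    by (rule integral_le[OF set_borel_integral_eq_integral(1)[OF integrable]])
       (use decay_integral revenue_le_discounted_value_decay in auto)
  also have "\<dots> = discounted_value 0 - discounted_value T"
    using decay_integral by (rule integral_unique)
  also have "\<dots> \<le> vM x"
    using vM_nonneg[of "X T"] by (simp add: discounted_value_def X_0)
  finally show ?thesis .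
qed

lemma revenue_integral_le_vM: "(LINT s:{0..}|lborel. revenueM \<alpha> \<beta> r p X s) \<le> vM x"
proof (rule tendsto_upperbound)
  show "((\<lambda>T. LINT s:{0..T}|lborel. revenueM \<alpha> \<beta> r p X s) \<longlongrightarrow>
      (LINT s:{0..}|lborel. revenueM \<alpha> \<beta> r p X s)) at_top"
    using admissible by (intro tendsto_set_lebesgue_integral_at_top) (auto simp: admissibleM_def)
  show "\<forall>\<^sub>F T in at_top. (LINT s:{0..T}|lborel. revenueM \<alpha> \<beta> r p X s) \<le> vM x"
    using eventually_ge_at_top[of 0] by eventually_elim (rule revenue_integral_le_vM_finite)
qed simp

end

section \<open>The optimal policy\<close>

text \<open>Along the trajectory of the optimal price, \<open>omega\<close> grows like \<open>w0 * exp (r * t)\<close> until it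
  reaches \<open>-1\<close> at the exhaustion time \<open>tau\<close>. At zero capacity the price \<open>\<alpha>\<close> makes demand vanish.\<close>
locale optimal_pair = monopoly +
  fixes x :: real
  assumes x_nonneg: "0 \<le> x"
begin

definition "w0 = omega x"
definition "tau = - ln (- w0) / r"
definition "omega_path t = w0 * exp (r * t)"
definition "opt_state t = (if t \<le> tau then capacity (omega_path t) else 0)"
definition "opt_price y = (if y \<le> 0 then \<alpha> else \<alpha> * (1 - omega y) / 2)"
definition "opt_revenue t = \<alpha>^2 / (4 * \<beta>) * (exp (- r * t) - w0^2 * exp (r * t))"

lemma w0_bounds: "-1 \<le> w0" "w0 < 0"
  using omega_nonneg_arg[OF x_nonneg] by (auto simp: w0_def)

lemma tau_nonneg: "0 \<le> tau"
  using w0_bounds r_pos by (simp add: tau_def divide_nonpos_pos)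

lemma exp_r_tau: "exp (r * tau) = - 1 / w0" "exp (- r * tau) = - w0"
proof -
  have "- r * tau = ln (- w0)" using r_pos by (simp add: tau_def)
  then show "exp (- r * tau) = - w0" using w0_bounds by simp
  then show "exp (r * tau) = - 1 / w0"
    using w0_bounds by (simp add: exp_minus field_simps)
qed

lemma omega_path_tau: "omega_path tau = -1"
  using exp_r_tau w0_bounds by (simp add: omega_path_def)

lemma omega_path_neg: "omega_path t < 0"
  using w0_bounds by (simp add: omega_path_def mult_neg_pos)

lemma omega_path_gt_minus_one:
  assumes "t < tau"
  shows "-1 < omega_path t"
proof -
  have "exp (r * t) < exp (r * tau)" using assms r_pos by simp
  then have "w0 * exp (r * tau) < w0 * exp (r * t)"
    using w0_bounds by (simp add: mult_less_cancel_left_neg)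
  then show ?thesis using omega_path_tau by (simp add: omega_path_def)
qed

lemma opt_state_pos: "t < tau \<Longrightarrow> 0 < opt_state t"
  using capacity_pos[OF omega_path_gt_minus_one omega_path_neg] by (simp add: opt_state_def)

lemma opt_state_exhausted: "tau \<le> t \<Longrightarrow> opt_state t = 0"
  using omega_path_tau by (auto simp: opt_state_def capacity_def)

lemma omega_opt_state: "t < tau \<Longrightarrow> omega (opt_state t) = omega_path t"
  using omega_capacity[OF omega_path_gt_minus_one omega_path_neg] by (simp add: opt_state_def)

lemma opt_state_0: "opt_state 0 = x"
  using tau_nonneg capacity_omega[OF x_nonneg] by (simp add: opt_state_def omega_path_def w0_def)

lemma capacity_omega_path_has_derivative:
  "((\<lambda>t. capacity (omega_path t)) has_real_derivative - r * (1 + omega_path t) / mu) (at t)"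
proof -
  have "((\<lambda>t. capacity (omega_path t)) has_real_derivative
      (- 1 / omega_path t - 1) / mu * (w0 * (exp (r * t) * r))) (at t)"
    unfolding omega_path_def
    by (rule DERIV_chain2[where f = capacity and g = "\<lambda>s. w0 * exp (r * s)" and x = t,
          OF capacity_has_derivative[OF omega_path_neg[of t, unfolded omega_path_def]]])
       (auto intro!: derivative_eq_intros)
  moreover have "(- 1 / omega_path t - 1) / mu * (w0 * (exp (r * t) * r)) = - r * (1 + omega_path t) / mu"
    using omega_path_neg[of t] w0_bounds mu_pos r_pos by (simp add: omega_path_def field_simps)
  ultimately show ?thesis by simp
qed

lemma opt_demand: "t < tau \<Longrightarrow> demandM \<alpha> \<beta> (opt_price (opt_state t)) = r * (1 + omega_path t) / mu"
  using opt_state_pos[of t] omega_opt_state[of t] \<alpha>_pos \<beta>_pos r_pos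
  by (simp add: opt_price_def demandM_def mu_def field_simps)

lemma opt_demand_exhausted: "tau \<le> t \<Longrightarrow> demandM \<alpha> \<beta> (opt_price (opt_state t)) = 0"
  using opt_state_exhausted by (simp add: opt_price_def demandM_def)

lemma opt_state_has_derivative:
  assumes "0 \<le> t"
  shows "(opt_state has_real_derivative - demandM \<alpha> \<beta> (opt_price (opt_state t))) (at t within {0..})"
proof -
  consider "t < tau" | "tau < t" | "t = tau" by linarith
  then show ?thesis
  proof cases
    case 1
    have "(opt_state has_real_derivative - r * (1 + omega_path t) / mu) (at t)"
      by (rule has_field_derivative_transform_within_open[OF capacity_omega_path_has_derivative,
            where S = "{..<tau}"]) (use 1 in \<open>auto simp: opt_state_def\<close>)
    then show ?thesis using opt_demand[OF 1] by (auto intro: has_field_derivative_at_within)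
  next
    case 2
    have "((\<lambda>s. 0) has_real_derivative 0) (at t)" by simp
    then have "(opt_state has_real_derivative 0) (at t)"
      by (rule has_field_derivative_transform_within_open[where S = "{tau<..}"])
         (use 2 opt_state_exhausted in auto)
    then show ?thesis using opt_demand_exhausted[of t] 2 by (auto intro: has_field_derivative_at_within)
  next
    case 3
    have "((\<lambda>s. capacity (omega_path s)) has_real_derivative 0) (at tau)"
      using capacity_omega_path_has_derivative[of tau] by (simp add: omega_path_tau)
    then have "((\<lambda>s. (capacity (omega_path s) - capacity (omega_path tau)) / (s - tau)) \<longlongrightarrow> 0)
        (at tau)"
      by (simp add: has_field_derivative_iff)
    then have "((\<lambda>s. (capacity (omega_path s) - capacity (omega_path tau)) / (s - tau)) \<longlongrightarrow> 0)
        (at tau within {0..tau})"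
      by (rule tendsto_within_subset) simp
    then have left: "((\<lambda>s. (opt_state s - opt_state tau) / (s - tau)) \<longlongrightarrow> 0) (at tau within {0..tau})"
      by (rule Lim_transform_within[where d = 1]) (auto simp: opt_state_def)
    have right: "((\<lambda>s. (opt_state s - opt_state tau) / (s - tau)) \<longlongrightarrow> 0) (at tau within {tau..})"
      by (rule Lim_transform_within[OF tendsto_const, where d = 1]) (auto simp: opt_state_exhausted)
    have "{0..} = {0..tau} \<union> {tau..}" using tau_nonneg by auto
    then have "((\<lambda>s. (opt_state s - opt_state tau) / (s - tau)) \<longlongrightarrow> 0) (at tau within {0..})"
      using left right by (simp add: Lim_within_Un)
    then show ?thesis using 3 opt_demand_exhausted[of tau] by (simp add: has_field_derivative_iff)
  qed
qed

lemma opt_price_nonneg: "0 \<le> opt_price y"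
proof (cases "y \<le> 0")
  case False
  then have "omega y < 0" using omega_nonneg_arg(2) by simp
  then show ?thesis using \<alpha>_pos False by (simp add: opt_price_def)
qed (use \<alpha>_pos in \<open>simp add: opt_price_def\<close>)

lemma opt_revenue_eq:
  "indicator {0..} t * revenueM \<alpha> \<beta> r opt_price opt_state t = indicator {0..tau} t * opt_revenue t"
proof -
  consider "t < 0" | "0 \<le> t" "t < tau" | "tau \<le> t" by linarith
  then show ?thesis
  proof cases
    case 1
    then show ?thesis using tau_nonneg by (simp add: indicator_def)
  next
    case 2
    have "revenueM \<alpha> \<beta> r opt_price opt_state t
        = exp (- r * t) * (\<alpha> * (1 - omega_path t) / 2) * (r * (1 + omega_path t) / mu)"
      using opt_state_pos[OF 2(2)] omega_opt_state[OF 2(2)] opt_demand[OF 2(2)]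
      by (simp add: revenueM_def opt_price_def)
    also have "\<dots> = opt_revenue t"
      using \<alpha>_pos \<beta>_pos r_pos
      by (simp add: opt_revenue_def omega_path_def mu_def power2_eq_square exp_minus field_simps)
    finally show ?thesis using 2 by (simp add: indicator_def)
  next
    case 3
    have "revenueM \<alpha> \<beta> r opt_price opt_state t = 0"
      using opt_state_exhausted[OF 3] by (simp add: revenueM_def)
    moreover have "opt_revenue tau = 0"
      using exp_r_tau w0_bounds by (simp add: opt_revenue_def power2_eq_square)
    ultimately show ?thesis using 3 by (auto simp: indicator_def)
  qed
qed

lemma continuous_on_opt_revenue: "continuous_on A opt_revenue"
  unfolding opt_revenue_def by (intro continuous_intros)

lemma opt_revenue_integrable: "set_integrable lborel {0..} (revenueM \<alpha> \<beta> r opt_price opt_state)"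
  using borel_integrable_atLeastAtMost'[OF continuous_on_opt_revenue, of 0 tau]
  unfolding set_integrable_def by (simp add: opt_revenue_eq)

lemma opt_revenue_integral:
  "(LINT t:{0..}|lborel. revenueM \<alpha> \<beta> r opt_price opt_state t) = K * (w0 + 1)^2"
proof -
  define F where "F t = \<alpha>^2 / (4 * \<beta>) * (- exp (- r * t) / r - w0^2 * exp (r * t) / r)" for t
  have "(LINT t:{0..}|lborel. revenueM \<alpha> \<beta> r opt_price opt_state t) = (LINT t:{0..tau}|lborel. opt_revenue t)"
    unfolding set_lebesgue_integral_def using opt_revenue_eq by simp
  also have "\<dots> = (LBINT t=ereal 0..ereal tau. opt_revenue t)"
    using interval_integral_Icc[OF tau_nonneg, of opt_revenue] by simp
  also have "\<dots> = F tau - F 0"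
  proof (rule interval_integral_FTC_finite)
    fix t
    show "(F has_vector_derivative opt_revenue t) (at t within {min 0 tau..max 0 tau})"
      unfolding has_real_derivative_iff_has_vector_derivative[symmetric] F_def opt_revenue_def
      using r_pos \<beta>_pos by (auto intro!: derivative_eq_intros simp: field_simps)
  qed (rule continuous_on_opt_revenue)
  also have "\<dots> = K * (w0 + 1)^2"
    using exp_r_tau w0_bounds \<alpha>_pos \<beta>_pos r_pos
    by (simp add: F_def K_def power2_eq_square field_simps)
  finally show ?thesis .
qed

lemma opt_admissible: "admissibleM \<alpha> \<beta> r x opt_price opt_state"
  unfolding admissibleM_def
  using opt_price_nonneg opt_state_0 opt_state_has_derivative opt_revenue_integrable by auto

end

theorem proposition3p1:
  fixes \<alpha> \<beta> r x :: real
  assumes "\<alpha> > 0" and "\<beta> > 0" and "r > 0" and "x \<ge> 0"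
  shows "valueM \<alpha> \<beta> r x =
    \<alpha>^2 / (4 * \<beta> * r) *
      (lambertW (- exp (- (2 * \<beta> * r / \<alpha>) * x - 1)) + 1)^2"
proof -
  interpret optimal_pair \<alpha> \<beta> r x
    using assms by unfold_locales
  have "valueM \<alpha> \<beta> r x = vM x"
    unfolding valueM_def
  proof (rule cSup_eq_maximum)
    show "vM x \<in> {J. \<exists>p X. admissibleM \<alpha> \<beta> r x p X \<and>
        J = (LINT t:{0..}|lborel. revenueM \<alpha> \<beta> r p X t)}"
    proof (intro CollectI exI conjI)
      show "vM x = (LINT t:{0..}|lborel. revenueM \<alpha> \<beta> r opt_price opt_state t)"
        using opt_revenue_integral vM_eq[OF x_nonneg] by (simp add: w0_def)
    qed (rule opt_admissible)
  next
    fix J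
    assume "J \<in> {J. \<exists>p X. admissibleM \<alpha> \<beta> r x p X \<and>
        J = (LINT t:{0..}|lborel. revenueM \<alpha> \<beta> r p X t)}"
    then obtain p X where admissible: "admissibleM \<alpha> \<beta> r x p X"
      and J: "J = (LINT t:{0..}|lborel. revenueM \<alpha> \<beta> r p X t)" by blast
    interpret admissible_pair \<alpha> \<beta> r x p X
      using assms admissible by unfold_locales
    show "J \<le> vM x" using J revenue_integral_le_vM by simp
  qed
  also have "\<dots> = K * (omega x + 1)^2" by (rule vM_eq[OF x_nonneg])
  finally show ?thesis unfolding K_def omega_def mu_def .
qed

end
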